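(* Let $\mathcal{F}$ be a family of $n$ pseudo-parabolas in the plane and let $k$ be a positive integer. Then the number of intersection points of two curves in $\mathcal{F}$ that lie strictly above at most $k-2$ other curves in $\mathcal{F}$ is at most $2(k-1)n$.
   Context: A family of pseudo-parabolas is a family of bi-infinite $x$-monotone curves in the plane (graphs of continuous functions defined on all of $\mathbb{R}$), every two of which intersect in at most two points. *)

theory Defs
  imports Complex_Main
begin

definition pseudo_parabolas :: "(real \<Rightarrow> real) set \<Rightarrow> bool" where
  "pseudo_parabolas F \<longleftrightarrow>
     (\<forall>f\<in>F. continuous_on UNIV f) \<and>
     (\<forall>f\<in>F. \<forall>g\<in>F. f \<noteq> g \<longrightarrow> finite {x. f x = g x} \<and> card {x. f x = g x} \<le> 2)"

definition low_vertices :: "(real \<Rightarrow> real) set \<Rightarrow> int \<Rightarrow> (real \<times> real) set" where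
  "low_vertices F m =
     {(x, y). (\<exists>f\<in>F. \<exists>g\<in>F. f \<noteq> g \<and> f x = y \<and> g x = y) \<and>
              int (card {h\<in>F. h x < y}) \<le> m}"

end

theory Submission
  imports Defs
begin

text \<open>Charge every intersection point of two curves f and g to a side of it: since f and g
meet at most twice, on one of the two open half-lines bounded by the point they do not meet,
so there one of them, say g, lies strictly above the other. Fix g and the left side. If
x0 < x1 < ... are the points charged to g from the left, the witnessing curves fi
(through g at xi, below g to its left) are pairwise different, and for i > 0 fi passes
strictly below g at x0. At most k - 2 curves are below x0, so g receives at most k - 1 charges
from each side, and there are n curves. The right side is the left side of the family
reflected by t \<mapsto> -t.\<close>

lemma continuous_on_connected_sign:
  fixes h :: "'a::topological_space \<Rightarrow> real"
  assumes "continuous_on S h" and "connected S" and "\<And>t. t \<in> S \<Longrightarrow> h t \<noteq> 0"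
  shows "(\<forall>t\<in>S. 0 < h t) \<or> (\<forall>t\<in>S. h t < 0)"
proof (rule ccontr)
  assume "\<not> ?thesis"
  then obtain a b where "a \<in> S" "b \<in> S" "h a \<le> 0" "0 \<le> h b" by force
  moreover have "connected (h ` S)"
    using assms(1,2) by (rule connected_continuous_image)
  ultimately have "0 \<in> h ` S"
    unfolding connected_iff_interval by blast
  with assms(3) show False by auto
qed

lemma pseudo_parabolas_vertex_side:
  assumes "pseudo_parabolas F" and "f \<in> F" and "g \<in> F" and "f \<noteq> g" and "f x = g x"
  obtains S where "S = {..<x} \<or> S = {x<..}" and "(\<forall>t\<in>S. f t < g t) \<or> (\<forall>t\<in>S. g t < f t)"
proof -
  let ?Z = "{t. f t = g t}"
  have "finite ?Z" and "card ?Z \<le> 2" and cont_f: "continuous_on UNIV f" and cont_g: "continuous_on UNIV g"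
    using assms(1-4) unfolding pseudo_parabolas_def by auto
  have "(\<forall>t\<in>{..<x}. f t \<noteq> g t) \<or> (\<forall>t\<in>{x<..}. f t \<noteq> g t)"
  proof (rule ccontr)
    assume "\<not> ?thesis"
    then obtain t\<^sub>1 t\<^sub>2 where "t\<^sub>1 < x" "f t\<^sub>1 = g t\<^sub>1" "x < t\<^sub>2" "f t\<^sub>2 = g t\<^sub>2" by auto
    with \<open>f x = g x\<close> have "{t\<^sub>1, x, t\<^sub>2} \<subseteq> ?Z" and "card {t\<^sub>1, x, t\<^sub>2} = 3" by auto
    then have "3 \<le> card ?Z" using card_mono[OF \<open>finite ?Z\<close>] by metis
    with \<open>card ?Z \<le> 2\<close> show False by simp
  qed
  then obtain S where S: "S = {..<x} \<or> S = {x<..}" and meet_free: "\<forall>t\<in>S. f t \<noteq> g t"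
    by blast
  have "continuous_on S (\<lambda>t. g t - f t)"
    using continuous_on_diff[OF continuous_on_subset[OF cont_g] continuous_on_subset[OF cont_f]] by simp
  moreover have "connected S" using S by auto
  moreover have "\<And>t. t \<in> S \<Longrightarrow> g t - f t \<noteq> 0" using meet_free by (metis eq_iff_diff_eq_0)
  ultimately have "(\<forall>t\<in>S. 0 < g t - f t) \<or> (\<forall>t\<in>S. g t - f t < 0)"
    by (rule continuous_on_connected_sign)
  with S show thesis by (intro that[of S]) auto
qed

lemma pseudo_parabolas_finite_meets:
  assumes "pseudo_parabolas F" and "finite F" and "g \<in> F"
  shows "finite {x. \<exists>f\<in>F. f \<noteq> g \<and> f x = g x}"
proof -
  have "{x. \<exists>f\<in>F. f \<noteq> g \<and> f x = g x} = (\<Union>f\<in>F - {g}. {x. f x = g x})" by auto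
  with assms show ?thesis unfolding pseudo_parabolas_def by auto
qed

text \<open>The points charged to g from the half-line side x (the instances are lessThan and
greaterThan); j bounds the number of curves strictly below the point.\<close>

definition low_contacts ::
    "(real \<Rightarrow> real) set \<Rightarrow> nat \<Rightarrow> (real \<Rightarrow> real) \<Rightarrow> (real \<Rightarrow> real set) \<Rightarrow> real set" where
  "low_contacts F j g side =
     {x. card {h\<in>F. h x < g x} < j \<and> (\<exists>f\<in>F. f x = g x \<and> (\<forall>t\<in>side x. f t < g t))}"

lemma finite_low_contacts:
  assumes "pseudo_parabolas F" and "finite F" and "g \<in> F" and "\<And>x. side x \<noteq> {}"
  shows "finite (low_contacts F j g side)"
proof (rule finite_subset[OF _ pseudo_parabolas_finite_meets[OF assms(1-3)]])
  show "low_contacts F j g side \<subseteq> {x. \<exists>f\<in>F. f \<noteq> g \<and> f x = g x}"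
    unfolding low_contacts_def using assms(4) by (fastforce simp: ex_in_conv[symmetric])
qed

lemma card_low_contacts_left:
  assumes "finite F"
  shows "card (low_contacts F j g lessThan) \<le> j"
proof -
  let ?A = "low_contacts F j g lessThan"
  show ?thesis
  proof (cases "finite ?A \<and> ?A \<noteq> {}")
    case False
    then show ?thesis by auto
  next
    case True
    define x\<^sub>0 where "x\<^sub>0 = Min ?A"
    have "x\<^sub>0 \<in> ?A" and x\<^sub>0_le: "\<And>x. x \<in> ?A \<Longrightarrow> x\<^sub>0 \<le> x"
      using True unfolding x\<^sub>0_def by auto
    define below where "below = {h\<in>F. h x\<^sub>0 < g x\<^sub>0}"
    have "card below < j" using \<open>x\<^sub>0 \<in> ?A\<close> unfolding low_contacts_def below_def by simp
    have "\<forall>x\<in>?A. \<exists>f. f \<in> F \<and> f x = g x \<and> (\<forall>t<x. f t < g t)"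
      unfolding low_contacts_def by auto
    then obtain w where w: "\<And>x. x \<in> ?A \<Longrightarrow> w x \<in> F \<and> w x x = g x \<and> (\<forall>t<x. w x t < g t)"
      by metis
    have w_distinct: "w x \<noteq> w y" if "x \<in> ?A" and "y \<in> ?A" and "x < y" for x y
      using w[OF that(1)] w[OF that(2)] that(3) by force
    have "inj_on w ?A"
      by (rule inj_onI) (metis w_distinct linorder_neqE_linordered_idom)
    then have "inj_on w (?A - {x\<^sub>0})" by (rule inj_on_diff)
    moreover have "w ` (?A - {x\<^sub>0}) \<subseteq> below"
    proof
      fix f assume "f \<in> w ` (?A - {x\<^sub>0})"
      then obtain x where "x \<in> ?A" "x\<^sub>0 < x" "f = w x"
        using x\<^sub>0_le by force
      then show "f \<in> below" using w unfolding below_def by blast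
    qed
    moreover have "finite below" using assms unfolding below_def by simp
    ultimately have "card (?A - {x\<^sub>0}) \<le> card below" by (rule card_inj_on_le)
    moreover have "card ?A = Suc (card (?A - {x\<^sub>0}))"
      using True \<open>x\<^sub>0 \<in> ?A\<close> by (blast intro: card.remove)
    ultimately show ?thesis using \<open>card below < j\<close> by linarith
  qed
qed

lemma card_low_contacts_reflect:
  "card (low_contacts F j g greaterThan) =
     card (low_contacts ((\<lambda>h. h \<circ> uminus) ` F) j (g \<circ> uminus) lessThan)"
proof -
  let ?R = "\<lambda>h::real \<Rightarrow> real. h \<circ> uminus"
  have "inj ?R"
  proof (rule injI)
    fix h h' :: "real \<Rightarrow> real" assume "h \<circ> uminus = h' \<circ> uminus"
    then have "h (- (- x)) = h' (- (- x))" for x by (metis comp_apply)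
    then show "h = h'" by auto
  qed
  have below: "{h \<in> ?R ` F. h (- x) < (g \<circ> uminus) (- x)} = ?R ` {h\<in>F. h x < g x}" for x
    by auto
  have card_below: "card {h \<in> ?R ` F. h (- x) < (g \<circ> uminus) (- x)} = card {h\<in>F. h x < g x}" for x
    unfolding below using \<open>inj ?R\<close> by (simp add: card_image inj_on_subset)
  have contact: "(\<exists>f\<in>?R ` F. f (- x) = (g \<circ> uminus) (- x) \<and> (\<forall>t\<in>{..<- x}. f t < (g \<circ> uminus) t))
      \<longleftrightarrow> (\<exists>f\<in>F. f x = g x \<and> (\<forall>t\<in>{x<..}. f t < g t))" for x
  proof
    assume "\<exists>f\<in>F. f x = g x \<and> (\<forall>t\<in>{x<..}. f t < g t)"
    then obtain f where "f \<in> F" "f x = g x" and "\<forall>t\<in>{x<..}. f t < g t" by blast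
    then show "\<exists>f\<in>?R ` F. f (- x) = (g \<circ> uminus) (- x) \<and> (\<forall>t\<in>{..<- x}. f t < (g \<circ> uminus) t)"
      by (intro bexI[of _ "?R f"]) (auto simp: less_minus_iff)
  next
    assume "\<exists>f\<in>?R ` F. f (- x) = (g \<circ> uminus) (- x) \<and> (\<forall>t\<in>{..<- x}. f t < (g \<circ> uminus) t)"
    then obtain f where "f \<in> F" "f x = g x" and "\<And>t. t < - x \<Longrightarrow> f (- t) < g (- t)" by auto
    then show "\<exists>f\<in>F. f x = g x \<and> (\<forall>t\<in>{x<..}. f t < g t)"
      by (metis greaterThan_iff neg_less_iff_less minus_minus)
  qed
  have reflect: "x \<in> low_contacts F j g greaterThan \<longleftrightarrow> - x \<in> low_contacts (?R ` F) j (g \<circ> uminus) lessThan" for x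
    unfolding low_contacts_def mem_Collect_eq card_below contact ..
  have "bij_betw uminus (low_contacts F j g greaterThan) (low_contacts (?R ` F) j (g \<circ> uminus) lessThan)"
    by (rule bij_betw_byWitness[where f' = uminus]) (simp_all add: image_subset_iff reflect)
  then show ?thesis by (rule bij_betw_same_card)
qed

lemma card_low_contacts_right:
  assumes "finite F"
  shows "card (low_contacts F j g greaterThan) \<le> j"
  unfolding card_low_contacts_reflect using assms by (simp add: card_low_contacts_left)

lemma low_vertices_charged:
  assumes "pseudo_parabolas F" and "(x, y) \<in> low_vertices F m"
  obtains g where "g \<in> F" and "y = g x"
    and "x \<in> low_contacts F (nat (m + 1)) g lessThan \<union> low_contacts F (nat (m + 1)) g greaterThan"
proof -
  obtain f g where "f \<in> F" "g \<in> F" "f \<noteq> g" "f x = y" "g x = y"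
    and level: "int (card {h\<in>F. h x < y}) \<le> m"
    using assms(2) unfolding low_vertices_def by auto
  have "f x = g x" using \<open>f x = y\<close> \<open>g x = y\<close> by simp
  with assms(1) \<open>f \<in> F\<close> \<open>g \<in> F\<close> \<open>f \<noteq> g\<close>
  obtain S where S: "S = {..<x} \<or> S = {x<..}" and "(\<forall>t\<in>S. f t < g t) \<or> (\<forall>t\<in>S. g t < f t)"
    by (rule pseudo_parabolas_vertex_side)
  then obtain u l where "u \<in> {f, g}" "l \<in> {f, g}" and l_below: "\<forall>t\<in>S. l t < u t"
    by blast
  then have "u \<in> F" "l \<in> F" "u x = y" "l x = y"
    using \<open>f \<in> F\<close> \<open>g \<in> F\<close> \<open>f x = y\<close> \<open>g x = y\<close> by auto
  moreover have "card {h\<in>F. h x < y} < nat (m + 1)" using level by linarith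
  ultimately have "x \<in> low_contacts F (nat (m + 1)) u lessThan \<union> low_contacts F (nat (m + 1)) u greaterThan"
    using S l_below unfolding low_contacts_def by auto
  with \<open>u \<in> F\<close> \<open>u x = y\<close> show thesis by (intro that) auto
qed

theorem theorem4:
  fixes F :: "(real \<Rightarrow> real) set" and n k :: nat
  assumes "pseudo_parabolas F" and "finite F" and "card F = n" and "k \<ge> 1"
  shows "card (low_vertices F (int k - 2)) \<le> 2 * (k - 1) * n"
proof -
  define C where "C g = (\<lambda>x. (x, g x)) `
      (low_contacts F (k - 1) g lessThan \<union> low_contacts F (k - 1) g greaterThan)" for g
  have "nat (int k - 2 + 1) = k - 1" using assms(4) by linarith
  then have "low_vertices F (int k - 2) \<subseteq> (\<Union>g\<in>F. C g)"
    unfolding C_def by (force elim: low_vertices_charged[OF assms(1)])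
  moreover have "finite (C g)" if "g \<in> F" for g
    unfolding C_def using finite_low_contacts[OF assms(1,2) that] by (simp add: lt_ex gt_ex)
  ultimately have "card (low_vertices F (int k - 2)) \<le> card (\<Union>g\<in>F. C g)"
    using assms(2) by (intro card_mono) auto
  also have "\<dots> \<le> (\<Sum>g\<in>F. card (C g))"
    using assms(2) by (rule card_UN_le)
  also have "\<dots> \<le> (\<Sum>g\<in>F. 2 * (k - 1))"
  proof (rule sum_mono)
    fix g
    have "card (C g) \<le> card (low_contacts F (k - 1) g lessThan) + card (low_contacts F (k - 1) g greaterThan)"
      unfolding C_def by (subst card_image) (auto simp: inj_on_def card_Un_le)
    also have "\<dots> \<le> 2 * (k - 1)"
      using card_low_contacts_left[OF assms(2), of "k - 1" g] card_low_contacts_right[OF assms(2), of "k - 1" g]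
      by linarith
    finally show "card (C g) \<le> 2 * (k - 1)" .
  qed
  also have "\<dots> = 2 * (k - 1) * n" using assms(3) by simp
  finally show ?thesis .
qed

end
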